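(* Let $\varepsilon\in[0,1)$ and let $\rho',\tau'\in\mathcal{D}(P')$ be density operators. Let $\mathcal{P},\mathcal{E}\subseteq\mathcal{D}(P)$ satisfy $\operatorname{conv}(\mathcal{P})\cap\operatorname{aff}(\mathcal{E})\neq\emptyset$. Then there exists a linear map $\mathcal{L}$ from operators on $P$ to operators on $P'$ such that, for every $\rho\in\mathcal{P}$ and every $\tau\in\mathcal{E}$, $T(\mathcal{L}(\rho),\rho')\le\varepsilon$ and $\mathcal{L}(\tau)=\tau'$ (i.e. the conversion $(\mathcal{P},\mathcal{E})\xrightarrow{\mathcal{L},\varepsilon}(\rho',\tau')$ is achievable by some Gibbs-preserving linear map) if and only if $\varepsilon\ge T(\rho',\tau')$.
   Context: All Hilbert spaces are finite-dimensional; $\mathcal{D}(P)$ is the set of density operators on system $P$. The trace distance is $T(X,Y)=\tfrac12\|X-Y\|_1$. $\operatorname{conv}(\mathcal{P})$ is the convex hull and $\operatorname{aff}(\mathcal{E})=\{\sum_i a_i\tau_i:\tau_i\in\mathcal{E},a_i\in\mathbb{R},\sum_i a_i=1\}$ the affine hull. An uncertain athermal state is a pair of sets $(\mathcal{P},\mathcal{E})$ of candidate nonequilibrium and equilibrium (Gibbs) states. For a map $\mathcal{F}$, the conversion $(\mathcal{P},\mathcal{E})\xrightarrow{\mathcal{F},\varepsilon}(\mathcal{P}',\mathcal{E}')$ means: for every $(\rho,\tau)\in\mathcal{P}\times\mathcal{E}$ there exists $(\rho',\tau')\in\mathcal{P}'\times\mathcal{E}'$ with $T(\mathcal{F}(\rho),\rho')\le\varepsilon$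 and $\mathcal{F}(\tau)=\tau'$; singleton sets are identified with their element. The class GPL (Gibbs-preserving linear maps) consists of all linear maps sending the input Gibbs state to the output Gibbs state; in this framework that requirement is precisely the condition $\mathcal{F}(\tau)=\tau'$ in the conversion. *)

theory Defs
  imports "Jordan_Normal_Form.Matrix" "Jordan_Normal_Form.Char_Poly"
begin

(* Operators on a d-dimensional Hilbert space P are complex d x d matrices (carrier_mat d d). *)

definition adj_mat :: "complex mat \<Rightarrow> complex mat" where
  "adj_mat A = mat (dim_col A) (dim_row A) (\<lambda>(i,j). cnj (A $$ (j,i)))"

definition mtrace :: "complex mat \<Rightarrow> complex" where
  "mtrace A = (\<Sum>i<dim_row A. A $$ (i,i))"

definition hermitian_mat :: "complex mat \<Rightarrow> bool" where
  "hermitian_mat A \<longleftrightarrow> A = adj_mat A"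

definition psd_mat :: "nat \<Rightarrow> complex mat \<Rightarrow> bool" where
  "psd_mat d A \<longleftrightarrow> (\<forall>v :: nat \<Rightarrow> complex.
     \<exists>r::real. r \<ge> 0 \<and> (\<Sum>i<d. \<Sum>j<d. cnj (v i) * A $$ (i,j) * v j) = complex_of_real r)"

definition density_ops :: "nat \<Rightarrow> complex mat set" where
  "density_ops d = {A. A \<in> carrier_mat d d \<and> hermitian_mat A \<and> psd_mat d A \<and> mtrace A = 1}"

(* the eigenvalues (with multiplicity) of a square complex matrix, as a list of roots of
   the characteristic polynomial; the multiset is unique, so sums over it are well defined *)
definition eigvals_list :: "complex mat \<Rightarrow> complex list" where
  "eigvals_list A = (SOME as. char_poly A = (\<Prod>a\<leftarrow>as. [:- a, 1:]) \<and> length as = dim_row A)"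

(* trace norm ||X||_1 = tr sqrt(X^dagger X) = sum of square roots of eigenvalues of X^dagger X *)
definition trace_norm :: "complex mat \<Rightarrow> real" where
  "trace_norm X = sum_list (map (\<lambda>a. sqrt (Re a)) (eigvals_list (adj_mat X * X)))"

definition trace_dist :: "complex mat \<Rightarrow> complex mat \<Rightarrow> real" where
  "trace_dist X Y = trace_norm (X - Y) / 2"

fun lin_comb :: "nat \<Rightarrow> (nat \<Rightarrow> real) \<Rightarrow> (nat \<Rightarrow> complex mat) \<Rightarrow> nat \<Rightarrow> complex mat" where
  "lin_comb d c x 0 = 0\<^sub>m d d"
| "lin_comb d c x (Suc k) = lin_comb d c x k + complex_of_real (c k) \<cdot>\<^sub>m x k"

definition conv_mat :: "nat \<Rightarrow> complex mat set \<Rightarrow> complex mat set" where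
  "conv_mat d S = {M. \<exists>k c x. (\<forall>i<k. x i \<in> S \<and> c i \<ge> 0) \<and> (\<Sum>i<k. c i) = 1
                              \<and> M = lin_comb d c x k}"

definition aff_mat :: "nat \<Rightarrow> complex mat set \<Rightarrow> complex mat set" where
  "aff_mat d S = {M. \<exists>k c x. (\<forall>i<k. x i \<in> S) \<and> (\<Sum>i<k. c i) = 1
                              \<and> M = lin_comb d c x k}"

definition linear_op_map :: "nat \<Rightarrow> nat \<Rightarrow> (complex mat \<Rightarrow> complex mat) \<Rightarrow> bool" where
  "linear_op_map d d' L \<longleftrightarrow>
     (\<forall>X \<in> carrier_mat d d. L X \<in> carrier_mat d' d') \<and>
     (\<forall>X \<in> carrier_mat d d. \<forall>Y \<in> carrier_mat d d. L (X + Y) = L X + L Y) \<and>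
     (\<forall>a. \<forall>X \<in> carrier_mat d d. L (a \<cdot>\<^sub>m X) = a \<cdot>\<^sub>m L X)"

end

theory Submission
  imports Defs "Jordan_Normal_Form.Schur_Decomposition" "Berlekamp_Zassenhaus.Mahler_Measure"
begin

(* Suppose a linear map L sends every tau in E to tau' and every rho in P to within epsilon of rho'.
   Take M in conv(P) and aff(E). Writing M as an affine combination of states in E gives L M = tau',
   writing it as a convex combination sum c_i rho_i gives tau' - rho' = sum c_i (L rho_i - rho'),
   and convexity of the trace norm yields T(rho', tau') <= epsilon. Conversely, the replacement map
   X |-> tr(X) tau' is linear and sends every density operator to tau'.

   Convexity of the trace norm follows from its variational form: ||X||_1 is the maximum of
   Re tr(V^dagger X U) over partial isometries V and unitaries U. The maximum is attained because,
   for a unitary P diagonalising X^dagger X, the columns of X P are orthogonal with the singular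
   values of X as norms; the unitary diagonalisation of Hermitian matrices is proved by induction
   on the dimension. *)

hide_const (open) Determinant.adj_mat

section \<open>Adjoints and block-diagonal matrices\<close>

lemma adj_mat_dim [simp]: "dim_row (adj_mat A) = dim_col A" "dim_col (adj_mat A) = dim_row A"
  unfolding adj_mat_def by simp_all

lemma adj_mat_carrier [simp]: "A \<in> carrier_mat m n \<Longrightarrow> adj_mat A \<in> carrier_mat n m"
  unfolding carrier_mat_def by simp

lemma adj_mat_index [simp]:
  "i < dim_col A \<Longrightarrow> j < dim_row A \<Longrightarrow> adj_mat A $$ (i,j) = cnj (A $$ (j,i))"
  unfolding adj_mat_def by simp

lemma adj_mat_adj_mat [simp]: "adj_mat (adj_mat A) = A"
  by (rule eq_matI) simp_all

lemma adj_mat_one [simp]: "adj_mat (1\<^sub>m n) = 1\<^sub>m n"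
  by (rule eq_matI) auto

lemma adj_mat_mult:
  "A \<in> carrier_mat m n \<Longrightarrow> B \<in> carrier_mat n p \<Longrightarrow> adj_mat (A * B) = adj_mat B * adj_mat A"
  by (rule eq_matI) (auto simp: scalar_prod_def cnj_sum mult.commute intro: sum.cong)

lemma adj_mat_minus:
  "A \<in> carrier_mat m n \<Longrightarrow> B \<in> carrier_mat m n \<Longrightarrow> adj_mat (A - B) = adj_mat A - adj_mat B"
  by (rule eq_matI) auto

lemma adj_mat_four_block_diag:
  assumes "A \<in> carrier_mat k k" "D \<in> carrier_mat m m"
  shows "adj_mat (four_block_mat A (0\<^sub>m k m) (0\<^sub>m m k) D)
       = four_block_mat (adj_mat A) (0\<^sub>m k m) (0\<^sub>m m k) (adj_mat D)"
  by (rule eq_matI) (use assms in auto)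

lemma assoc_mult_mat4:
  assumes "A \<in> carrier_mat n n" "B \<in> carrier_mat n n" "C \<in> carrier_mat n n" "D \<in> carrier_mat n n"
  shows "A * B * (C * D) = A * (B * C) * D"
proof -
  have "A * B * (C * D) = A * (B * (C * D))"
    using assms by (intro assoc_mult_mat[of _ n n _ n _ n]) auto
  also have "B * (C * D) = B * C * D"
    using assms by (intro assoc_mult_mat[of _ n n _ n _ n, symmetric]) auto
  also have "A * (B * C * D) = A * (B * C) * D"
    using assms by (intro assoc_mult_mat[of _ n n _ n _ n, symmetric]) auto
  finally show ?thesis .
qed

lemma assoc_mult_mat5:
  assumes "X \<in> carrier_mat n n" "Y \<in> carrier_mat n n" "M \<in> carrier_mat n n"
    "Z \<in> carrier_mat n n" "T \<in> carrier_mat n n"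
  shows "X * Y * M * (Z * T) = X * (Y * M * Z) * T"
proof -
  have YM: "Y * M \<in> carrier_mat n n" using assms(2,3) by (rule mult_carrier_mat)
  have ZT: "Z * T \<in> carrier_mat n n" using assms(4,5) by (rule mult_carrier_mat)
  have YMZ: "Y * M * Z \<in> carrier_mat n n" using YM assms(4) by (rule mult_carrier_mat)
  have "X * Y * M * (Z * T) = X * (Y * M) * (Z * T)"
    using assoc_mult_mat[OF assms(1-3)] by simp
  also have "\<dots> = X * (Y * M * (Z * T))" using assms(1) YM ZT by (rule assoc_mult_mat)
  also have "Y * M * (Z * T) = Y * M * Z * T" using YM assms(4,5) by (rule assoc_mult_mat[symmetric])
  also have "X * (Y * M * Z * T) = X * (Y * M * Z) * T"
    using assms(1) YMZ assms(5) by (rule assoc_mult_mat[symmetric])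
  finally show ?thesis .
qed

lemma hermitian_mat_adj_mult_mult:
  assumes "A \<in> carrier_mat n n" "W \<in> carrier_mat n m" "hermitian_mat A"
  shows "hermitian_mat (adj_mat W * A * W)"
proof -
  have "adj_mat (adj_mat W * A * W) = adj_mat W * adj_mat (adj_mat W * A)"
    using assms by (intro adj_mat_mult[of _ m n]) auto
  also have "\<dots> = adj_mat W * (adj_mat A * W)"
    using assms by (simp add: adj_mat_mult[of "adj_mat W" m n A n])
  finally have "adj_mat (adj_mat W * A * W) = adj_mat W * adj_mat A * W"
    using assms by (simp add: assoc_mult_mat[of _ m n _ n _ m])
  then show ?thesis using assms unfolding hermitian_mat_def by simp
qed

lemma mult_four_block_diag:
  assumes "A1 \<in> carrier_mat k k" "A2 \<in> carrier_mat m m" "B1 \<in> carrier_mat k k" "B2 \<in> carrier_mat m m"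
  shows "four_block_mat A1 (0\<^sub>m k m) (0\<^sub>m m k) A2 * four_block_mat B1 (0\<^sub>m k m) (0\<^sub>m m k) B2
       = four_block_mat (A1 * B1) (0\<^sub>m k m) (0\<^sub>m m k) (A2 * B2)"
  using assms by (simp add: mult_four_block_mat[OF assms(1) _ _ assms(2) assms(3) _ _ assms(4)])

lemma adj_block_diag_conj:
  assumes E: "E \<in> carrier_mat k k" and B: "B \<in> carrier_mat m m" and P: "P \<in> carrier_mat m m"
  shows "adj_mat (four_block_mat (1\<^sub>m k) (0\<^sub>m k m) (0\<^sub>m m k) P) * four_block_mat E (0\<^sub>m k m) (0\<^sub>m m k) B
           * four_block_mat (1\<^sub>m k) (0\<^sub>m k m) (0\<^sub>m m k) P
       = four_block_mat E (0\<^sub>m k m) (0\<^sub>m m k) (adj_mat P * B * P)"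
proof -
  have adjP: "adj_mat P \<in> carrier_mat m m" using P by simp
  have adjPB: "adj_mat P * B \<in> carrier_mat m m" using adjP B by (rule mult_carrier_mat)
  have "adj_mat (four_block_mat (1\<^sub>m k) (0\<^sub>m k m) (0\<^sub>m m k) P)
      = four_block_mat (1\<^sub>m k) (0\<^sub>m k m) (0\<^sub>m m k) (adj_mat P)"
    using adj_mat_four_block_diag[OF one_carrier_mat P] by simp
  moreover have "four_block_mat (1\<^sub>m k) (0\<^sub>m k m) (0\<^sub>m m k) (adj_mat P) * four_block_mat E (0\<^sub>m k m) (0\<^sub>m m k) B
      = four_block_mat E (0\<^sub>m k m) (0\<^sub>m m k) (adj_mat P * B)"
    using mult_four_block_diag[OF one_carrier_mat adjP E B] E by simp
  moreover have "four_block_mat E (0\<^sub>m k m) (0\<^sub>m m k) (adj_mat P * B) * four_block_mat (1\<^sub>m k) (0\<^sub>m k m) (0\<^sub>m m k) P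
      = four_block_mat E (0\<^sub>m k m) (0\<^sub>m m k) (adj_mat P * B * P)"
    using mult_four_block_diag[OF E adjPB one_carrier_mat P] E by simp
  ultimately show ?thesis by simp
qed

lemma diagonal_mat_four_block_diag:
  assumes "A \<in> carrier_mat k k" "D \<in> carrier_mat m m" "diagonal_mat A" "diagonal_mat D"
  shows "diagonal_mat (four_block_mat A (0\<^sub>m k m) (0\<^sub>m m k) D)"
  unfolding diagonal_mat_def
proof (intro allI impI)
  fix i j
  assume "i < dim_row (four_block_mat A (0\<^sub>m k m) (0\<^sub>m m k) D)"
    and "j < dim_col (four_block_mat A (0\<^sub>m k m) (0\<^sub>m m k) D)" and "i \<noteq> j"
  with assms show "four_block_mat A (0\<^sub>m k m) (0\<^sub>m m k) D $$ (i, j) = 0"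
    unfolding diagonal_mat_def by (cases "i < k"; cases "j < k") auto
qed

section \<open>Unitary diagonalisation of Hermitian matrices\<close>

definition unitary_mat :: "nat \<Rightarrow> complex mat \<Rightarrow> bool" where
  "unitary_mat n U \<longleftrightarrow> U \<in> carrier_mat n n \<and> adj_mat U * U = 1\<^sub>m n"

lemma unitary_matD:
  assumes "unitary_mat n U"
  shows "U \<in> carrier_mat n n" "adj_mat U * U = 1\<^sub>m n" "U * adj_mat U = 1\<^sub>m n"
  using assms mat_mult_left_right_inverse[of "adj_mat U" n U] unfolding unitary_mat_def by auto

lemma unitary_mat_mult:
  assumes "unitary_mat n U" "unitary_mat n W"
  shows "unitary_mat n (U * W)"
proof -
  have U: "U \<in> carrier_mat n n" and W: "W \<in> carrier_mat n n" using assms unitary_matD by auto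
  have "adj_mat (U * W) * (U * W) = adj_mat W * ((adj_mat U * U) * W)"
    using U W by (simp add: adj_mat_mult assoc_mult_mat[of _ n n _ n _ n])
  then show ?thesis using assms U W unfolding unitary_mat_def by simp
qed

lemma unitary_mat_four_block_diag:
  assumes "unitary_mat m P"
  shows "unitary_mat (Suc m) (four_block_mat (1\<^sub>m 1) (0\<^sub>m 1 m) (0\<^sub>m m 1) P)"
proof -
  have P: "P \<in> carrier_mat m m" using assms unitary_matD by auto
  have "four_block_mat (1\<^sub>m 1) (0\<^sub>m 1 m) (0\<^sub>m m 1) P \<in> carrier_mat (1 + m) (1 + m)"
    using P by (intro four_block_carrier_mat) auto
  then show ?thesis using assms P unfolding unitary_mat_def
    by (simp add: adj_mat_four_block_diag mult_four_block_diag)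
qed

lemma cscalar_prod_self: "w \<bullet>c w = of_real (\<Sum>k<dim_vec w. (cmod (w $ k))\<^sup>2)"
proof -
  have "w \<bullet>c w = (\<Sum>k<dim_vec w. w $ k * cnj (w $ k))"
    unfolding scalar_prod_def by (simp add: atLeast0LessThan)
  also have "\<dots> = (\<Sum>k<dim_vec w. of_real ((cmod (w $ k))\<^sup>2))"
    by (intro sum.cong refl) (rule complex_norm_square[symmetric])
  finally show ?thesis by simp
qed

lemma unitary_mat_of_corthogonal_cols:
  assumes ws: "set ws \<subseteq> carrier_vec n" "corthogonal ws" "length ws = n"
  shows "unitary_mat n (mat_of_cols n (map (\<lambda>w. of_real (1 / sqrt (Re (w \<bullet>c w))) \<cdot>\<^sub>v w) ws))"
proof -
  define a where "a j = 1 / sqrt (Re (ws ! j \<bullet>c ws ! j))" for j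
  define W where "W = mat_of_cols n (map (\<lambda>w. of_real (1 / sqrt (Re (w \<bullet>c w))) \<cdot>\<^sub>v w) ws)"
  have ws_carrier: "ws ! j \<in> carrier_vec n" if "j < n" for j
    using ws that by auto
  have self_pos: "ws ! j \<bullet>c ws ! j = of_real (Re (ws ! j \<bullet>c ws ! j)) \<and> Re (ws ! j \<bullet>c ws ! j) > 0"
    if j: "j < n" for j
  proof -
    have "ws ! j \<bullet>c ws ! j \<noteq> 0" using ws j by (auto simp: corthogonal_def)
    then show ?thesis using cscalar_prod_self[of "ws ! j"]
      by (metis Re_complex_of_real of_real_0 order_le_less sum_nonneg zero_le_power2)
  qed
  have W: "W \<in> carrier_mat n n" unfolding W_def using ws by auto
  have W_index: "W $$ (i,j) = of_real (a j) * ws ! j $ i" if "i < n" "j < n" for i j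
    using that ws ws_carrier[of j] unfolding W_def mat_of_cols_def a_def by simp
  have "(adj_mat W * W) $$ (i,j) = 1\<^sub>m n $$ (i,j)" if i: "i < n" and j: "j < n" for i j
  proof -
    have "(adj_mat W * W) $$ (i,j) = (\<Sum>k<n. cnj (W $$ (k,i)) * W $$ (k,j))"
      using W i j by (simp add: scalar_prod_def atLeast0LessThan)
    also have "\<dots> = of_real (a i * a j) * (\<Sum>k<n. ws ! j $ k * cnj (ws ! i $ k))"
      by (simp add: W_index i j sum_distrib_left mult_ac)
    also have "\<dots> = of_real (a i * a j) * (ws ! j \<bullet>c ws ! i)"
      using ws_carrier[OF i] ws_carrier[OF j] by (simp add: scalar_prod_def atLeast0LessThan)
    also have "\<dots> = 1\<^sub>m n $$ (i,j)"
    proof (cases "i = j")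
      case True
      have "a i * a i * Re (ws ! i \<bullet>c ws ! i) = 1"
        using self_pos[OF i] unfolding a_def by (simp add: field_simps)
      then show ?thesis using self_pos[OF i] i True
        by (metis index_one_mat(1) of_real_1 of_real_mult)
    next
      case False
      then show ?thesis using ws i j by (auto simp: corthogonal_def)
    qed
    finally show ?thesis .
  qed
  then have "adj_mat W * W = 1\<^sub>m n" using W by (intro eq_matI) auto
  with W show ?thesis unfolding unitary_mat_def W_def by simp
qed

lemma unitary_mat_with_first_col:
  assumes v: "v \<in> carrier_vec n" "v \<noteq> 0\<^sub>v n"
  shows "\<exists>W c. unitary_mat n W \<and> col W 0 = c \<cdot>\<^sub>v v"
proof -
  interpret cof_vec_space n "TYPE(complex)" .
  define b where "b = basis_completion v"
  from basis_completion[OF v, folded b_def]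
  have b: "set b \<subseteq> carrier_vec n" "distinct b" "\<not> lin_dep (set b)" "hd b = v" "length b = n"
    by auto
  have "n > 0" using v by (cases n) (auto intro!: eq_vecI)
  then obtain vs where b_Cons: "b = v # vs" using b by (cases b) auto
  define ws where "ws = gram_schmidt n b"
  from gram_schmidt_result[OF b(1-3) ws_def]
  have ws: "set ws \<subseteq> carrier_vec n" "corthogonal ws" "length ws = n" by (auto simp: b(5))
  have "hd ws = v" unfolding ws_def b_Cons using gram_schmidt_hd[OF v(1)] by simp
  then have "ws ! 0 = v" using ws(3) \<open>n > 0\<close> by (cases ws) auto
  then show ?thesis
    using unitary_mat_of_corthogonal_cols[OF ws] ws(3) \<open>n > 0\<close> v(1) by (intro exI conjI) auto
qed

lemma col_unitary_conj_eigenvector: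
  assumes A: "A \<in> carrier_mat n n" and W: "unitary_mat n W" and v: "v \<in> carrier_vec n"
    and W_col: "col W 0 = c \<cdot>\<^sub>v v" and eigen: "A *\<^sub>v v = e \<cdot>\<^sub>v v" and n: "0 < n"
  shows "col (adj_mat W * A * W) 0 = e \<cdot>\<^sub>v unit_vec n 0"
proof -
  have W_carrier: "W \<in> carrier_mat n n" "adj_mat W \<in> carrier_mat n n"
    using W unitary_matD by auto
  have "col (adj_mat W * A * W) 0 = (adj_mat W * A) *\<^sub>v (c \<cdot>\<^sub>v v)"
    using W_carrier A n W_col by (subst col_mult2) auto
  also have "\<dots> = c \<cdot>\<^sub>v (adj_mat W *\<^sub>v (e \<cdot>\<^sub>v v))"
    using mult_mat_vec[of "adj_mat W * A" n n v c] assoc_mult_mat_vec[OF W_carrier(2) A v]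
      W_carrier A v eigen by (metis mult_carrier_mat)
  also have "\<dots> = e \<cdot>\<^sub>v (adj_mat W *\<^sub>v (c \<cdot>\<^sub>v v))"
    using mult_mat_vec[OF W_carrier(2) v, of e] mult_mat_vec[OF W_carrier(2) v, of c]
    by (simp add: smult_smult_assoc mult.commute)
  also have "c \<cdot>\<^sub>v v = col W 0" using W_col by simp
  also have "adj_mat W *\<^sub>v col W 0 = col (adj_mat W * W) 0"
    using col_mult2[OF W_carrier(2,1) n] by simp
  finally show ?thesis using W n unitary_matD(2) by fastforce
qed

lemma hermitian_block_diag_of_first_col:
  assumes B: "B \<in> carrier_mat (Suc m) (Suc m)" "hermitian_mat B"
    and B_col: "col B 0 = e \<cdot>\<^sub>v unit_vec (Suc m) 0"
  shows "\<exists>B'. B' \<in> carrier_mat m m \<and> hermitian_mat B' \<and>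
           B = four_block_mat (mat 1 1 (\<lambda>_. e)) (0\<^sub>m 1 m) (0\<^sub>m m 1) B'"
proof (intro exI conjI)
  define B' where "B' = mat m m (\<lambda>(i,j). B $$ (Suc i, Suc j))"
  have B_adj: "B $$ (i,j) = cnj (B $$ (j,i))" if "i < Suc m" "j < Suc m" for i j
    using B that unfolding hermitian_mat_def by (metis adj_mat_index carrier_matD)
  have B_first_col: "B $$ (i,0) = (if i = 0 then e else 0)" if "i < Suc m" for i
    using B that B_col[THEN arg_cong[where f = "\<lambda>w. w $ i"]] by auto
  show "B' \<in> carrier_mat m m" unfolding B'_def by simp
  show "hermitian_mat B'"
    unfolding hermitian_mat_def
  proof (rule eq_matI)
    fix i j assume "i < dim_row (adj_mat B')" "j < dim_col (adj_mat B')"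
    then show "B' $$ (i,j) = adj_mat B' $$ (i,j)" using B_adj[of "Suc i" "Suc j"] by (simp add: B'_def)
  qed (simp_all add: B'_def)
  show "B = four_block_mat (mat 1 1 (\<lambda>_. e)) (0\<^sub>m 1 m) (0\<^sub>m m 1) B'"
  proof (rule eq_matI)
    fix i j assume "i < dim_row (four_block_mat (mat 1 1 (\<lambda>_. e)) (0\<^sub>m 1 m) (0\<^sub>m m 1) B')"
      "j < dim_col (four_block_mat (mat 1 1 (\<lambda>_. e)) (0\<^sub>m 1 m) (0\<^sub>m m 1) B')"
    then have i: "i < Suc m" and j: "j < Suc m" by (auto simp: B'_def)
    show "B $$ (i,j) = four_block_mat (mat 1 1 (\<lambda>_. e)) (0\<^sub>m 1 m) (0\<^sub>m m 1) B' $$ (i,j)"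
    proof (cases "j = 0")
      case True
      then show ?thesis using i B_first_col by (auto simp: B'_def)
    next
      case False
      then show ?thesis using i j B_first_col[of j] B_adj[of 0 j] by (cases i) (auto simp: B'_def)
    qed
  qed (use B in \<open>auto simp: B'_def\<close>)
qed

lemma hermitian_unitary_deflation:
  assumes A: "A \<in> carrier_mat (Suc m) (Suc m)" and "hermitian_mat A"
  shows "\<exists>W e B'. unitary_mat (Suc m) W \<and> B' \<in> carrier_mat m m \<and> hermitian_mat B' \<and>
           adj_mat W * A * W = four_block_mat (mat 1 1 (\<lambda>_. e)) (0\<^sub>m 1 m) (0\<^sub>m m 1) B'"
proof -
  from char_poly_factorized[OF A] obtain es where
    "char_poly A = (\<Prod>a\<leftarrow>es. [:- a, 1:])" "length es = Suc m" by auto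
  then obtain e where "poly (char_poly A) e = 0" by (cases es) auto
  then have "eigenvalue A e" using eigenvalue_root_char_poly[OF A] by simp
  then obtain v where v: "v \<in> carrier_vec (Suc m)" "v \<noteq> 0\<^sub>v (Suc m)" "A *\<^sub>v v = e \<cdot>\<^sub>v v"
    using A unfolding eigenvalue_def eigenvector_def by auto
  obtain W c where W: "unitary_mat (Suc m) W" "col W 0 = c \<cdot>\<^sub>v v"
    using unitary_mat_with_first_col[OF v(1,2)] by blast
  have W_carrier: "W \<in> carrier_mat (Suc m) (Suc m)" using W unitary_matD by auto
  have "adj_mat W * A * W \<in> carrier_mat (Suc m) (Suc m)"
    using W_carrier A by (metis adj_mat_carrier mult_carrier_mat)
  from hermitian_block_diag_of_first_col[OF this
      hermitian_mat_adj_mult_mult[OF A W_carrier \<open>hermitian_mat A\<close>]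
      col_unitary_conj_eigenvector[OF A W(1) v(1) W(2) v(3)]]
  show ?thesis using W(1) by blast
qed

theorem hermitian_unitarily_diagonalizable:
  assumes "A \<in> carrier_mat n n" "hermitian_mat A"
  shows "\<exists>P. unitary_mat n P \<and> diagonal_mat (adj_mat P * A * P)"
  using assms
proof (induction n arbitrary: A)
  case 0
  show ?case by (rule exI[of _ "1\<^sub>m 0"]) (auto simp: unitary_mat_def diagonal_mat_def)
next
  case (Suc m)
  obtain W e B' where W: "unitary_mat (Suc m) W" and B': "B' \<in> carrier_mat m m" "hermitian_mat B'"
    and block: "adj_mat W * A * W = four_block_mat (mat 1 1 (\<lambda>_. e)) (0\<^sub>m 1 m) (0\<^sub>m m 1) B'"
    using hermitian_unitary_deflation[OF Suc.prems] by blast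
  obtain P' where P': "unitary_mat m P'" "diagonal_mat (adj_mat P' * B' * P')"
    using Suc.IH[OF B'(1,2)] by blast
  define E where "E = mat 1 1 (\<lambda>_. e)"
  define F where "F = four_block_mat (1\<^sub>m 1) (0\<^sub>m 1 m) (0\<^sub>m m 1) P'"
  have F: "unitary_mat (Suc m) F" unfolding F_def by (rule unitary_mat_four_block_diag[OF P'(1)])
  have E: "E \<in> carrier_mat 1 1" "diagonal_mat E" unfolding E_def diagonal_mat_def by auto
  have carriers: "A \<in> carrier_mat (Suc m) (Suc m)" "W \<in> carrier_mat (Suc m) (Suc m)"
    "F \<in> carrier_mat (Suc m) (Suc m)" "P' \<in> carrier_mat m m"
    using Suc.prems W F P' unitary_matD by auto
  have "adj_mat (W * F) * A * (W * F) = adj_mat F * adj_mat W * A * (W * F)"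
    using carriers by (simp add: adj_mat_mult)
  also have "\<dots> = adj_mat F * (adj_mat W * A * W) * F"
    using carriers by (intro assoc_mult_mat5) auto
  also have "\<dots> = four_block_mat E (0\<^sub>m 1 m) (0\<^sub>m m 1) (adj_mat P' * B' * P')"
    unfolding block F_def E_def[symmetric] by (rule adj_block_diag_conj[OF E(1) B'(1) carriers(4)])
  finally have "diagonal_mat (adj_mat (W * F) * A * (W * F))"
    using diagonal_mat_four_block_diag[OF E(1) _ E(2) P'(2)]
      mult_carrier_mat[OF mult_carrier_mat[OF adj_mat_carrier[OF carriers(4)] B'(1)] carriers(4)]
    by simp
  then show ?case using unitary_mat_mult[OF W F] by blast
qed

section \<open>The trace norm\<close>

lemma mset_eigvals_list_eq_diag_mat:
  assumes A: "A \<in> carrier_mat n n" and B: "B \<in> carrier_mat n n"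
    and "similar_mat A B" "upper_triangular B"
  shows "mset (eigvals_list A) = mset (diag_mat B)"
proof -
  have "\<exists>es. char_poly A = (\<Prod>a\<leftarrow>es. [:- a, 1:]) \<and> length es = dim_row A"
    using char_poly_factorized[OF A] A by simp
  then have "char_poly A = (\<Prod>a\<leftarrow>eigvals_list A. [:- a, 1:])"
    unfolding eigvals_list_def by (rule someI2_ex) simp
  moreover have "char_poly A = (\<Prod>a\<leftarrow>diag_mat B. [:- a, 1:])"
    using char_poly_similar[OF assms(3)] char_poly_upper_triangular[OF B assms(4)] by simp
  ultimately show ?thesis by (metis reconstruct_poly_monic_defines_mset)
qed

definition col_sqnorm :: "complex mat \<Rightarrow> nat \<Rightarrow> real" where
  "col_sqnorm N k = (\<Sum>i<dim_row N. (cmod (N $$ (i,k)))\<^sup>2)"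

lemma col_sqnorm_nonneg: "col_sqnorm N k \<ge> 0"
  unfolding col_sqnorm_def by (intro sum_nonneg) simp

lemma adj_mat_mult_self_diag:
  assumes "k < dim_col N"
  shows "(adj_mat N * N) $$ (k,k) = of_real (col_sqnorm N k)"
proof -
  have "(adj_mat N * N) $$ (k,k) = (\<Sum>i<dim_row N. cnj (N $$ (i,k)) * N $$ (i,k))"
    using assms by (simp add: scalar_prod_def atLeast0LessThan)
  also have "\<dots> = (\<Sum>i<dim_row N. of_real ((cmod (N $$ (i,k)))\<^sup>2))"
    by (intro sum.cong refl) (metis complex_norm_square mult.commute)
  finally show ?thesis unfolding col_sqnorm_def by simp
qed

lemma adj_mat_mult_self_mult:
  assumes X: "X \<in> carrier_mat n n" and P: "P \<in> carrier_mat n n"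
  shows "adj_mat (X * P) * (X * P) = adj_mat P * (adj_mat X * X) * P"
proof -
  have adj: "adj_mat X \<in> carrier_mat n n" "adj_mat P \<in> carrier_mat n n" using X P by auto
  have "adj_mat (X * P) * (X * P) = adj_mat P * adj_mat X * (X * P)"
    by (simp add: adj_mat_mult[OF X P])
  also have "\<dots> = adj_mat P * (adj_mat X * X * P)"
    using assoc_mult_mat[OF adj(2,1) mult_carrier_mat[OF X P]] assoc_mult_mat[OF adj(1) X P] by simp
  also have "\<dots> = adj_mat P * (adj_mat X * X) * P"
    using assoc_mult_mat[OF adj(2) mult_carrier_mat[OF adj(1) X] P] by simp
  finally show ?thesis .
qed

lemma similar_mat_unitary_conj:
  assumes H: "H \<in> carrier_mat n n" and P: "unitary_mat n P"
  shows "similar_mat H (adj_mat P * H * P)"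
proof -
  have P_carrier: "P \<in> carrier_mat n n" "adj_mat P \<in> carrier_mat n n" using P unitary_matD by auto
  define D where "D = adj_mat P * H * P"
  have D: "D \<in> carrier_mat n n"
    unfolding D_def using mult_carrier_mat[OF mult_carrier_mat[OF P_carrier(2) H] P_carrier(1)] .
  have "P * D * adj_mat P = P * adj_mat P * H * (P * adj_mat P)"
    using P_carrier(1,2) H P_carrier(1,2) unfolding D_def by (rule assoc_mult_mat5[symmetric])
  then have "H = P * D * adj_mat P" using unitary_matD(3)[OF P] H by simp
  then have "similar_mat_wit H D P (adj_mat P)"
    unfolding similar_mat_wit_def Let_def
    using H D P_carrier unitary_matD(2,3)[OF P] assoc_mult_mat[OF P_carrier(1) D P_carrier(2)] by auto
  then show ?thesis unfolding similar_mat_def D_def by blast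
qed

lemma gram_unitarily_diagonalizable:
  assumes X: "X \<in> carrier_mat n n"
  shows "\<exists>P. unitary_mat n P \<and> diagonal_mat (adj_mat (X * P) * (X * P))"
proof -
  have H: "adj_mat X * X \<in> carrier_mat n n" using mult_carrier_mat[OF adj_mat_carrier[OF X] X] .
  have "hermitian_mat (adj_mat X * X)"
    unfolding hermitian_mat_def using adj_mat_mult[of "adj_mat X" n n X n] X by simp
  from hermitian_unitarily_diagonalizable[OF H this] obtain P
    where "unitary_mat n P" "diagonal_mat (adj_mat P * (adj_mat X * X) * P)" by blast
  then show ?thesis using adj_mat_mult_self_mult[OF X] unitary_matD(1) by metis
qed

lemma adj_mat_mult_self_eq_mat_diag:
  assumes M: "M \<in> carrier_mat n n" and diag: "diagonal_mat (adj_mat M * M)"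
  shows "adj_mat M * M = mat_diag n (\<lambda>k. of_real (col_sqnorm M k))"
proof (rule eq_matI)
  fix i j assume "i < dim_row (mat_diag n (\<lambda>k. complex_of_real (col_sqnorm M k)))"
    "j < dim_col (mat_diag n (\<lambda>k. complex_of_real (col_sqnorm M k)))"
  then have ij: "i < n" "j < n" unfolding mat_diag_def by auto
  have dims: "dim_row (adj_mat M * M) = n" "dim_col (adj_mat M * M) = n" using M by simp_all
  show "(adj_mat M * M) $$ (i,j) = mat_diag n (\<lambda>k. of_real (col_sqnorm M k)) $$ (i,j)"
  proof (cases "i = j")
    case True
    have "(adj_mat M * M) $$ (j,j) = of_real (col_sqnorm M j)"
      using ij M by (intro adj_mat_mult_self_diag) simp
    then show ?thesis using ij True unfolding mat_diag_def by simp
  next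
    case False
    then show ?thesis
      using ij diag[unfolded diagonal_mat_def dims] unfolding mat_diag_def by simp
  qed
qed (use M in \<open>auto simp: mat_diag_def\<close>)

lemma trace_norm_eq_sum_sqrt_col_sqnorm:
  assumes X: "X \<in> carrier_mat n n" and P: "unitary_mat n P"
    and diag: "diagonal_mat (adj_mat (X * P) * (X * P))"
  shows "trace_norm X = (\<Sum>k<n. sqrt (col_sqnorm (X * P) k))"
proof -
  define H where "H = adj_mat X * X"
  have H: "H \<in> carrier_mat n n" unfolding H_def using mult_carrier_mat[OF adj_mat_carrier[OF X] X] .
  have XP: "X * P \<in> carrier_mat n n" using mult_carrier_mat[OF X unitary_matD(1)[OF P]] .
  define D where "D = mat_diag n (\<lambda>k. complex_of_real (col_sqnorm (X * P) k))"
  have D: "D = adj_mat P * H * P"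
    unfolding D_def H_def using adj_mat_mult_self_eq_mat_diag[OF XP diag]
      adj_mat_mult_self_mult[OF X unitary_matD(1)[OF P]] by simp
  have "mset (eigvals_list H) = mset (diag_mat D)"
    using similar_mat_unitary_conj[OF H P] unfolding D[symmetric]
    by (intro mset_eigvals_list_eq_diag_mat[OF H]) (auto simp: D_def upper_triangular_def mat_diag_def)
  then have "trace_norm X = sum_list (map (\<lambda>a. sqrt (Re a)) (diag_mat D))"
    unfolding trace_norm_def H_def[symmetric] by (metis mset_map sum_mset_sum_list)
  also have "\<dots> = (\<Sum>k<n. sqrt (col_sqnorm (X * P) k))"
    unfolding diag_mat_def D_def by (simp add: sum_list_distinct_conv_sum_set atLeast0LessThan mat_diag_def)
  finally show ?thesis .
qed

section \<open>Variational characterisation and convexity of the trace norm\<close>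

lemma unitary_mat_adj: "unitary_mat n U \<Longrightarrow> unitary_mat n (adj_mat U)"
  using unitary_matD[of n U] unfolding unitary_mat_def by simp

lemma col_sqnorm_adj_unitary:
  assumes "unitary_mat n C" "k < n"
  shows "col_sqnorm (adj_mat C) k = 1"
proof -
  have "(adj_mat (adj_mat C) * adj_mat C) $$ (k,k) = of_real (col_sqnorm (adj_mat C) k)"
    using assms unitary_matD(1) by (intro adj_mat_mult_self_diag) auto
  then show ?thesis using assms unitary_matD(1,3) by simp
qed

definition partial_isometry :: "complex mat \<Rightarrow> bool" where
  "partial_isometry V \<longleftrightarrow> V * adj_mat V * V = V"

lemma col_sqnorm_adj_partial_isometry_le:
  assumes V: "V \<in> carrier_mat n n" and M: "M \<in> carrier_mat n n" and "partial_isometry V" and k: "k < n"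
  shows "col_sqnorm (adj_mat V * M) k \<le> col_sqnorm M k"
proof -
  define Q where "Q = V * adj_mat V"
  define R where "R = 1\<^sub>m n - Q"
  have adj: "adj_mat V \<in> carrier_mat n n" "adj_mat M \<in> carrier_mat n n" using V M by auto
  have Q: "Q \<in> carrier_mat n n" unfolding Q_def using mult_carrier_mat[OF V adj(1)] .
  have R: "R \<in> carrier_mat n n" unfolding R_def using Q by (intro minus_carrier_mat)
  have adj_R: "adj_mat R = R"
    unfolding R_def Q_def using adj_mat_minus[OF one_carrier_mat Q[unfolded Q_def]] adj_mat_mult[OF V adj(1)]
    by simp
  have "Q * Q = V * adj_mat V * V * adj_mat V"
    unfolding Q_def by (rule assoc_mult_mat[OF mult_carrier_mat[OF V adj(1)] V adj(1), symmetric])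
  also have "\<dots> = Q"
    using \<open>partial_isometry V\<close> unfolding partial_isometry_def Q_def by (simp only:)
  finally have "Q * Q = Q" .
  then have "Q * R = 0\<^sub>m n n" unfolding R_def using mult_minus_distrib_mat[OF Q one_carrier_mat Q] Q by simp
  then have RR: "R * R = R"
    using minus_mult_distrib_mat[OF one_carrier_mat Q R] R unfolding R_def[symmetric] by (intro eq_matI) auto
  have gram_Q: "adj_mat (adj_mat V * M) * (adj_mat V * M) = adj_mat M * Q * M"
    unfolding Q_def using adj_mat_mult[OF adj(1) M] assoc_mult_mat4[OF adj(2) V adj(1) M] by simp
  have gram_R: "adj_mat (R * M) * (R * M) = adj_mat M * R * M"
    using adj_mat_mult[OF R M] adj_R assoc_mult_mat4[OF adj(2) R R M] RR by simp
  have "adj_mat M * M = adj_mat M * Q * M + adj_mat M * R * M"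
  proof -
    have "Q + R = 1\<^sub>m n" unfolding R_def using Q by (intro eq_matI) auto
    then have "adj_mat M * M = adj_mat M * (Q + R) * M" using right_mult_one_mat[OF adj(2)] by simp
    also have "\<dots> = (adj_mat M * Q + adj_mat M * R) * M"
      using mult_add_distrib_mat[OF adj(2) Q R] by simp
    also have "\<dots> = adj_mat M * Q * M + adj_mat M * R * M"
      using add_mult_distrib_mat[OF mult_carrier_mat[OF adj(2) Q] mult_carrier_mat[OF adj(2) R] M] .
    finally show ?thesis .
  qed
  then have gram_sum: "adj_mat M * M
      = adj_mat (adj_mat V * M) * (adj_mat V * M) + adj_mat (R * M) * (R * M)"
    unfolding gram_Q gram_R .
  have "of_real (col_sqnorm M k) = (adj_mat M * M) $$ (k,k)"
    using k M by (intro adj_mat_mult_self_diag[symmetric]) simp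
  also have "\<dots> = (adj_mat (adj_mat V * M) * (adj_mat V * M)) $$ (k,k)
      + (adj_mat (R * M) * (R * M)) $$ (k,k)"
    unfolding gram_sum using k R M by (intro index_add_mat(1)) simp_all
  also have "\<dots> = of_real (col_sqnorm (adj_mat V * M) k) + of_real (col_sqnorm (R * M) k)"
    using k R M adj(1) by (simp only: adj_mat_mult_self_diag index_mult_mat(3) carrier_matD(2))
  finally have "col_sqnorm M k = col_sqnorm (adj_mat V * M) k + col_sqnorm (R * M) k"
    by (simp flip: of_real_add)
  then show ?thesis using col_sqnorm_nonneg[of "R * M" k] by linarith
qed

lemma mtrace_add: "A \<in> carrier_mat n n \<Longrightarrow> B \<in> carrier_mat n n \<Longrightarrow> mtrace (A + B) = mtrace A + mtrace B"
  unfolding mtrace_def by (simp add: sum.distrib)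

lemma mtrace_smult: "A \<in> carrier_mat n n \<Longrightarrow> mtrace (a \<cdot>\<^sub>m A) = a * mtrace A"
  unfolding mtrace_def by (simp add: sum_distrib_left)

lemma mtrace_mat_diag: "mtrace (mat_diag n f) = (\<Sum>k<n. f k)"
  unfolding mtrace_def mat_diag_def by simp

lemma mtrace_mult:
  assumes "B \<in> carrier_mat n n" "C \<in> carrier_mat n n"
  shows "mtrace (B * C) = (\<Sum>k<n. \<Sum>i<n. B $$ (i,k) * C $$ (k,i))"
proof -
  have "mtrace (B * C) = (\<Sum>i<n. \<Sum>k<n. B $$ (i,k) * C $$ (k,i))"
    unfolding mtrace_def using assms by (simp add: scalar_prod_def atLeast0LessThan)
  also have "\<dots> = (\<Sum>k<n. \<Sum>i<n. B $$ (i,k) * C $$ (k,i))" by (rule sum.swap)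
  finally show ?thesis .
qed

lemma sum_mult_le_sqrt_sum_squares:
  fixes a b :: "'i \<Rightarrow> real"
  shows "(\<Sum>i\<in>I. a i * b i) \<le> sqrt (\<Sum>i\<in>I. (a i)\<^sup>2) * sqrt (\<Sum>i\<in>I. (b i)\<^sup>2)"
proof -
  have "(\<Sum>i\<in>I. a i * b i)\<^sup>2 \<le> (\<Sum>i\<in>I. (a i)\<^sup>2) * (\<Sum>i\<in>I. (b i)\<^sup>2)"
  proof (cases "finite I \<and> (\<Sum>i\<in>I. (b i)\<^sup>2) \<noteq> 0")
    case True
    define r where "r = (\<Sum>i\<in>I. a i * b i) / (\<Sum>i\<in>I. (b i)\<^sup>2)"
    have pos: "(\<Sum>i\<in>I. (b i)\<^sup>2) > 0"
      using True by (metis order_le_less sum_nonneg zero_le_power2)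
    have "0 \<le> (\<Sum>i\<in>I. (a i - r * b i)\<^sup>2)" by (simp add: sum_nonneg)
    also have "\<dots> = (\<Sum>i\<in>I. (a i)\<^sup>2) - 2 * r * (\<Sum>i\<in>I. a i * b i) + r\<^sup>2 * (\<Sum>i\<in>I. (b i)\<^sup>2)"
      by (simp add: power2_diff power_mult_distrib sum.distrib sum_subtractf sum_distrib_left mult_ac)
    also have "\<dots> = (\<Sum>i\<in>I. (a i)\<^sup>2) - (\<Sum>i\<in>I. a i * b i)\<^sup>2 / (\<Sum>i\<in>I. (b i)\<^sup>2)"
      using pos unfolding r_def by (simp add: power2_eq_square field_simps)
    finally show ?thesis using pos by (simp add: field_simps)
  next
    case False
    have "(\<Sum>i\<in>I. a i * b i) = 0"
    proof (cases "finite I")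
      case True
      then have "\<forall>i\<in>I. b i = 0" using False sum_nonneg_eq_0_iff[of I "\<lambda>i. (b i)\<^sup>2"] by simp
      then show ?thesis by simp
    qed simp
    then show ?thesis by (simp add: sum_nonneg)
  qed
  then have "sqrt ((\<Sum>i\<in>I. a i * b i)\<^sup>2) \<le> sqrt (\<Sum>i\<in>I. (a i)\<^sup>2) * sqrt (\<Sum>i\<in>I. (b i)\<^sup>2)"
    by (metis real_sqrt_le_mono real_sqrt_mult)
  then show ?thesis by simp
qed

lemma cmod_mtrace_mult_le:
  assumes B: "B \<in> carrier_mat n n" and C: "C \<in> carrier_mat n n"
  shows "cmod (mtrace (B * C)) \<le> (\<Sum>k<n. sqrt (col_sqnorm B k) * sqrt (col_sqnorm (adj_mat C) k))"
proof -
  have "cmod (mtrace (B * C)) \<le> (\<Sum>k<n. cmod (\<Sum>i<n. B $$ (i,k) * C $$ (k,i)))"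
    unfolding mtrace_mult[OF B C] by (rule norm_sum)
  also have "\<dots> \<le> (\<Sum>k<n. \<Sum>i<n. cmod (B $$ (i,k)) * cmod (C $$ (k,i)))"
    by (intro sum_mono order_trans[OF norm_sum]) (simp add: norm_mult)
  also have "\<dots> \<le> (\<Sum>k<n. sqrt (\<Sum>i<n. (cmod (B $$ (i,k)))\<^sup>2) * sqrt (\<Sum>i<n. (cmod (C $$ (k,i)))\<^sup>2))"
    by (intro sum_mono sum_mult_le_sqrt_sum_squares)
  also have "\<dots> = (\<Sum>k<n. sqrt (col_sqnorm B k) * sqrt (col_sqnorm (adj_mat C) k))"
    unfolding col_sqnorm_def using B C by (intro sum.cong refl) simp
  finally show ?thesis .
qed

lemma Re_mtrace_le_trace_norm:
  assumes X: "X \<in> carrier_mat n n" and V: "V \<in> carrier_mat n n" "partial_isometry V"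
    and U: "unitary_mat n U"
  shows "Re (mtrace (adj_mat V * X * U)) \<le> trace_norm X"
proof -
  obtain P where P: "unitary_mat n P" and diag: "diagonal_mat (adj_mat (X * P) * (X * P))"
    using gram_unitarily_diagonalizable[OF X] by blast
  note tn = trace_norm_eq_sum_sqrt_col_sqnorm[OF X P diag]
  have P_carrier: "P \<in> carrier_mat n n" "adj_mat P \<in> carrier_mat n n" using P unitary_matD by auto
  have U_carrier: "U \<in> carrier_mat n n" using U unitary_matD by auto
  define M where "M = X * P"
  have M: "M \<in> carrier_mat n n" unfolding M_def using mult_carrier_mat[OF X P_carrier(1)] .
  define C where "C = adj_mat P * U"
  have C: "unitary_mat n C" unfolding C_def using unitary_mat_mult[OF unitary_mat_adj[OF P] U] .
  have "X = M * adj_mat P"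
    unfolding M_def using assoc_mult_mat[OF X P_carrier] unitary_matD(3)[OF P] X by simp
  then have "adj_mat V * X * U = adj_mat V * M * C"
    unfolding C_def using assoc_mult_mat4[OF adj_mat_carrier[OF V(1)] M P_carrier(2) U_carrier] by simp
  then have "Re (mtrace (adj_mat V * X * U)) \<le> cmod (mtrace ((adj_mat V * M) * C))"
    by (simp add: complex_Re_le_cmod)
  also have "\<dots> \<le> (\<Sum>k<n. sqrt (col_sqnorm (adj_mat V * M) k) * sqrt (col_sqnorm (adj_mat C) k))"
    using V M C unitary_matD(1) by (intro cmod_mtrace_mult_le) auto
  also have "\<dots> \<le> (\<Sum>k<n. sqrt (col_sqnorm M k))"
    using col_sqnorm_adj_partial_isometry_le[OF V(1) M V(2)] col_sqnorm_adj_unitary[OF C]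
    by (intro sum_mono) simp
  finally show ?thesis unfolding tn M_def .
qed

lemma partial_isometry_normalize_cols:
  assumes M: "M \<in> carrier_mat n n" and diag: "diagonal_mat (adj_mat M * M)"
  shows "partial_isometry (M * mat_diag n (\<lambda>k. of_real (1 / sqrt (col_sqnorm M k))))"
proof -
  define s where "s k = col_sqnorm M k" for k
  define g where "g k = 1 / sqrt (s k)" for k
  define G where "G = mat_diag n (\<lambda>k. complex_of_real (g k))"
  define V where "V = M * G"
  have G: "G \<in> carrier_mat n n" "adj_mat G = G"
    unfolding G_def mat_diag_def by (auto intro!: eq_matI)
  have adj_M: "adj_mat M \<in> carrier_mat n n" using M by simp
  have V: "V \<in> carrier_mat n n" unfolding V_def using mult_carrier_mat[OF M G(1)] .
  \<comment> \<open>since 1 / 0 = 0, g vanishes exactly on the zero columns of M\<close>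
  have gsg: "g k * s k * g k = (if s k = 0 then 0 else 1)" for k
    using col_sqnorm_nonneg[of M k] unfolding g_def s_def
    by (auto simp: field_simps real_div_sqrt)
  have "adj_mat V * V = G * (adj_mat M * M) * G"
    unfolding V_def using adj_mat_mult[OF M G(1)] G assoc_mult_mat4[OF G(1) adj_M M G(1)] by simp
  also have "\<dots> = mat_diag n (\<lambda>k. complex_of_real (g k * s k * g k))"
    unfolding adj_mat_mult_self_eq_mat_diag[OF M diag] G_def s_def by simp
  finally have "V * adj_mat V * V = M * (G * mat_diag n (\<lambda>k. complex_of_real (g k * s k * g k)))"
    using assoc_mult_mat[OF V adj_mat_carrier[OF V] V] assoc_mult_mat[OF M G(1) mat_diag_dim]
    unfolding V_def by simp
  also have "G * mat_diag n (\<lambda>k. complex_of_real (g k * s k * g k)) = G"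
    unfolding G_def mat_diag_diag gsg by (intro arg_cong[where f = "mat_diag n"] ext) (simp add: g_def)
  finally show ?thesis unfolding partial_isometry_def V_def G_def g_def s_def .
qed

lemma trace_norm_attained:
  assumes X: "X \<in> carrier_mat n n"
  shows "\<exists>V U. V \<in> carrier_mat n n \<and> partial_isometry V \<and> unitary_mat n U \<and>
           Re (mtrace (adj_mat V * X * U)) = trace_norm X"
proof -
  obtain P where P: "unitary_mat n P" and diag: "diagonal_mat (adj_mat (X * P) * (X * P))"
    using gram_unitarily_diagonalizable[OF X] by blast
  have P_carrier: "P \<in> carrier_mat n n" using P unitary_matD by auto
  define M where "M = X * P"
  have M: "M \<in> carrier_mat n n" "adj_mat M \<in> carrier_mat n n"
    unfolding M_def using mult_carrier_mat[OF X P_carrier] by auto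
  define G where "G = mat_diag n (\<lambda>k. complex_of_real (1 / sqrt (col_sqnorm M k)))"
  define V where "V = M * G"
  have G: "G \<in> carrier_mat n n" "adj_mat G = G"
    unfolding G_def mat_diag_def by (auto intro!: eq_matI)
  have V: "V \<in> carrier_mat n n" unfolding V_def using mult_carrier_mat[OF M(1) G(1)] .
  have "adj_mat V * X * P = G * (adj_mat M * M)"
    unfolding V_def M_def using adj_mat_mult[OF M(1) G(1)] G assoc_mult_mat[OF adj_mat_carrier[OF V] X P_carrier]
      assoc_mult_mat[OF G(1) M(2) M(1)]
    by (simp add: M_def[symmetric] V_def[symmetric])
  also have "\<dots> = mat_diag n (\<lambda>k. complex_of_real (sqrt (col_sqnorm M k)))"
  proof -
    have gs: "complex_of_real (1 / sqrt (col_sqnorm M k)) * complex_of_real (col_sqnorm M k)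
        = complex_of_real (sqrt (col_sqnorm M k))" for k
      unfolding of_real_mult[symmetric] using real_div_sqrt[OF col_sqnorm_nonneg[of M k]] by simp
    show ?thesis
      unfolding adj_mat_mult_self_eq_mat_diag[OF M(1) diag[folded M_def]] G_def mat_diag_diag gs ..
  qed
  finally have "Re (mtrace (adj_mat V * X * P)) = trace_norm X"
    unfolding trace_norm_eq_sum_sqrt_col_sqnorm[OF X P diag] by (simp add: mtrace_mat_diag M_def)
  moreover have "partial_isometry V"
    unfolding V_def G_def using partial_isometry_normalize_cols[OF M(1) diag[folded M_def]] .
  ultimately show ?thesis using V P by blast
qed

lemma mtrace_adj_mult_add_mult:
  assumes V: "V \<in> carrier_mat n n" and U: "U \<in> carrier_mat n n"
    and X: "X \<in> carrier_mat n n" and Y: "Y \<in> carrier_mat n n"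
  shows "mtrace (adj_mat V * (X + Y) * U) = mtrace (adj_mat V * X * U) + mtrace (adj_mat V * Y * U)"
proof -
  have adj: "adj_mat V \<in> carrier_mat n n" using V by simp
  have "adj_mat V * (X + Y) * U = adj_mat V * X * U + adj_mat V * Y * U"
    using mult_add_distrib_mat[OF adj X Y]
      add_mult_distrib_mat[OF mult_carrier_mat[OF adj X] mult_carrier_mat[OF adj Y] U] by simp
  then show ?thesis
    using mtrace_add mult_carrier_mat[OF mult_carrier_mat[OF adj X] U]
      mult_carrier_mat[OF mult_carrier_mat[OF adj Y] U] by metis
qed

lemma mtrace_adj_mult_smult_mult:
  assumes V: "V \<in> carrier_mat n n" and U: "U \<in> carrier_mat n n" and X: "X \<in> carrier_mat n n"
  shows "mtrace (adj_mat V * (a \<cdot>\<^sub>m X) * U) = a * mtrace (adj_mat V * X * U)"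
proof -
  have adj: "adj_mat V \<in> carrier_mat n n" using V by simp
  have "adj_mat V * (a \<cdot>\<^sub>m X) * U = a \<cdot>\<^sub>m (adj_mat V * X * U)"
    using mult_smult_distrib[OF adj X] mult_smult_assoc_mat[OF mult_carrier_mat[OF adj X] U] by simp
  then show ?thesis using mtrace_smult mult_carrier_mat[OF mult_carrier_mat[OF adj X] U] by metis
qed

lemma trace_norm_add_le:
  assumes X: "X \<in> carrier_mat n n" and Y: "Y \<in> carrier_mat n n"
  shows "trace_norm (X + Y) \<le> trace_norm X + trace_norm Y"
proof -
  obtain V U where V: "V \<in> carrier_mat n n" "partial_isometry V" and U: "unitary_mat n U"
    and attained: "Re (mtrace (adj_mat V * (X + Y) * U)) = trace_norm (X + Y)"
    using trace_norm_attained[of "X + Y" n] Y by auto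
  have "trace_norm (X + Y) = Re (mtrace (adj_mat V * X * U)) + Re (mtrace (adj_mat V * Y * U))"
    unfolding attained[symmetric] using mtrace_adj_mult_add_mult[OF V(1) _ X Y] U unitary_matD(1) by simp
  also have "\<dots> \<le> trace_norm X + trace_norm Y"
    using Re_mtrace_le_trace_norm[OF X V U] Re_mtrace_le_trace_norm[OF Y V U] by simp
  finally show ?thesis .
qed

lemma trace_norm_smult_le:
  assumes X: "X \<in> carrier_mat n n" and r: "r \<ge> 0"
  shows "trace_norm (of_real r \<cdot>\<^sub>m X) \<le> r * trace_norm X"
proof -
  obtain V U where V: "V \<in> carrier_mat n n" "partial_isometry V" and U: "unitary_mat n U"
    and attained: "Re (mtrace (adj_mat V * (of_real r \<cdot>\<^sub>m X) * U)) = trace_norm (of_real r \<cdot>\<^sub>m X)"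
    using trace_norm_attained[OF smult_carrier_mat[OF X]] by blast
  have "trace_norm (of_real r \<cdot>\<^sub>m X) = r * Re (mtrace (adj_mat V * X * U))"
    unfolding attained[symmetric] using mtrace_adj_mult_smult_mult[OF V(1) _ X] U unitary_matD(1) by simp
  also have "\<dots> \<le> r * trace_norm X"
    using Re_mtrace_le_trace_norm[OF X V U] r by (rule mult_left_mono)
  finally show ?thesis .
qed

lemma trace_norm_minus_commute:
  assumes A: "A \<in> carrier_mat n n" and B: "B \<in> carrier_mat n n"
  shows "trace_norm (A - B) = trace_norm (B - A)"
proof -
  have "adj_mat (A - B) * (A - B) = adj_mat (B - A) * (B - A)"
  proof (rule eq_matI)
    fix i j assume "i < dim_row (adj_mat (B - A) * (B - A))" "j < dim_col (adj_mat (B - A) * (B - A))"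
    then have "i < n" "j < n" using A by auto
    then show "(adj_mat (A - B) * (A - B)) $$ (i,j) = (adj_mat (B - A) * (B - A)) $$ (i,j)"
      using A B by (simp add: scalar_prod_def algebra_simps)
  qed (use A B in auto)
  then show ?thesis unfolding trace_norm_def by simp
qed

lemma trace_dist_commute:
  "A \<in> carrier_mat n n \<Longrightarrow> B \<in> carrier_mat n n \<Longrightarrow> trace_dist A B = trace_dist B A"
  unfolding trace_dist_def using trace_norm_minus_commute by metis

lemma lin_comb_carrier: "\<forall>i<k. x i \<in> carrier_mat n n \<Longrightarrow> lin_comb n c x k \<in> carrier_mat n n"
  by (induction k) auto

lemma trace_norm_lin_comb_le:
  assumes "\<forall>i<k. x i \<in> carrier_mat n n \<and> c i \<ge> 0"
  shows "trace_norm (lin_comb n c x k) \<le> (\<Sum>i<k. c i * trace_norm (x i))"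
  using assms
proof (induction k)
  case 0
  have "trace_norm (0\<^sub>m n n) = trace_norm (of_real 0 \<cdot>\<^sub>m 0\<^sub>m n n)" by simp
  also have "\<dots> \<le> 0" using trace_norm_smult_le[of "0\<^sub>m n n" n 0] by simp
  finally show ?case by simp
next
  case (Suc k)
  have x: "x k \<in> carrier_mat n n" "c k \<ge> 0" using Suc.prems by auto
  have "lin_comb n c x k \<in> carrier_mat n n" using Suc.prems by (intro lin_comb_carrier) auto
  then have "trace_norm (lin_comb n c x (Suc k))
      \<le> trace_norm (lin_comb n c x k) + trace_norm (of_real (c k) \<cdot>\<^sub>m x k)"
    using trace_norm_add_le smult_carrier_mat[OF x(1)] by simp
  also have "\<dots> \<le> (\<Sum>i<k. c i * trace_norm (x i)) + c k * trace_norm (x k)"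
    using Suc trace_norm_smult_le[OF x] by (intro add_mono) auto
  finally show ?case by simp
qed

lemma one_smult_mat [simp]: "(1::'a::monoid_mult) \<cdot>\<^sub>m A = A"
  by (rule eq_matI) auto

lemma lin_comb_const:
  "T \<in> carrier_mat n n \<Longrightarrow> lin_comb n c (\<lambda>_. T) k = of_real (\<Sum>i<k. c i) \<cdot>\<^sub>m T"
  by (induction k) (auto intro!: eq_matI simp: distrib_right)

lemma lin_comb_minus_const:
  assumes "\<forall>i<k. x i \<in> carrier_mat n n" "T \<in> carrier_mat n n"
  shows "lin_comb n c (\<lambda>i. x i - T) k = lin_comb n c x k - of_real (\<Sum>i<k. c i) \<cdot>\<^sub>m T"
  using assms
proof (induction k)
  case (Suc k)
  then have "lin_comb n c x k \<in> carrier_mat n n" "x k \<in> carrier_mat n n"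
    by (auto intro: lin_comb_carrier)
  then show ?case using Suc by (auto intro!: eq_matI simp: algebra_simps)
qed (auto intro!: eq_matI)

lemma lin_comb_cong: "\<forall>i<k. x i = y i \<Longrightarrow> lin_comb n c x k = lin_comb n c y k"
  by (induction k) auto

lemma conv_mat_subset_aff_mat: "conv_mat d S \<subseteq> aff_mat d S"
  unfolding conv_mat_def aff_mat_def by blast

lemma aff_mat_empty [simp]: "aff_mat d {} = {}"
proof -
  have "(\<Sum>i<k. c i) \<noteq> (1::real)" if "\<forall>i<k. x i \<in> ({} :: complex mat set)" for k :: nat and c x
    using that by (cases k) auto
  then show ?thesis unfolding aff_mat_def by blast
qed

section \<open>Conversions by linear maps\<close>

lemma linear_op_map_zero:
  assumes "linear_op_map d d' L"
  shows "L (0\<^sub>m d d) = 0\<^sub>m d' d'"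
proof -
  have "L (0\<^sub>m d d) = L (0 \<cdot>\<^sub>m 0\<^sub>m d d)" by simp
  also have "\<dots> = 0 \<cdot>\<^sub>m L (0\<^sub>m d d)" using assms zero_carrier_mat unfolding linear_op_map_def by blast
  also have "\<dots> = 0\<^sub>m d' d'"
  proof -
    have "L (0\<^sub>m d d) \<in> carrier_mat d' d'" using assms zero_carrier_mat unfolding linear_op_map_def by blast
    then show ?thesis by (auto intro!: eq_matI)
  qed
  finally show ?thesis .
qed

lemma linear_op_map_lin_comb:
  assumes L: "linear_op_map d d' L" and x: "\<forall>i<k. x i \<in> carrier_mat d d"
  shows "L (lin_comb d c x k) = lin_comb d' c (\<lambda>i. L (x i)) k"
  using x
proof (induction k)
  case 0
  then show ?case using linear_op_map_zero[OF L] by simp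
next
  case (Suc k)
  then have "lin_comb d c x k \<in> carrier_mat d d" "x k \<in> carrier_mat d d"
    by (auto intro: lin_comb_carrier)
  then show ?case using Suc L unfolding linear_op_map_def by simp
qed

lemma linear_op_map_mtrace_smult:
  assumes "\<sigma> \<in> carrier_mat d' d'"
  shows "linear_op_map d d' (\<lambda>X. mtrace X \<cdot>\<^sub>m \<sigma>)"
  unfolding linear_op_map_def using assms
  by (auto simp: mtrace_add mtrace_smult add_smult_distrib_right_mat intro!: eq_matI)

lemma linear_op_map_aff_mat_const:
  assumes L: "linear_op_map d d' L" and E: "\<E> \<subseteq> carrier_mat d d" and \<tau>': "\<tau>' \<in> carrier_mat d' d'"
    and fixed: "\<forall>\<tau>\<in>\<E>. L \<tau> = \<tau>'" and M: "M \<in> aff_mat d \<E>"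
  shows "L M = \<tau>'"
proof -
  obtain k c y where y: "\<forall>i<k. y i \<in> \<E>" and c: "(\<Sum>i<k. c i) = 1" and M_aff: "M = lin_comb d c y k"
    using M unfolding aff_mat_def by blast
  have "L M = lin_comb d' c (\<lambda>_. \<tau>') k"
    unfolding M_aff using linear_op_map_lin_comb[OF L] y E fixed lin_comb_cong[of k "\<lambda>i. L (y i)"]
    by (metis subsetD)
  also have "\<dots> = \<tau>'" using lin_comb_const[OF \<tau>', of c k] by (simp add: c)
  finally show ?thesis .
qed

theorem trace_dist_le_of_conversion:
  assumes L: "linear_op_map d d' L"
    and P: "\<P> \<subseteq> carrier_mat d d" and E: "\<E> \<subseteq> carrier_mat d d"
    and \<rho>': "\<rho>' \<in> carrier_mat d' d'" and \<tau>': "\<tau>' \<in> carrier_mat d' d'"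
    and M: "M \<in> conv_mat d \<P>" "M \<in> aff_mat d \<E>"
    and close: "\<forall>\<rho>\<in>\<P>. trace_dist (L \<rho>) \<rho>' \<le> \<epsilon>" and fixed: "\<forall>\<tau>\<in>\<E>. L \<tau> = \<tau>'"
  shows "trace_dist \<tau>' \<rho>' \<le> \<epsilon>"
proof -
  obtain k c x where x: "\<forall>i<k. x i \<in> \<P> \<and> c i \<ge> 0" and c: "(\<Sum>i<k. c i) = 1"
    and M_conv: "M = lin_comb d c x k"
    using M(1) unfolding conv_mat_def by blast
  have Lx: "\<forall>i<k. L (x i) \<in> carrier_mat d' d'" using x P L unfolding linear_op_map_def by blast
  have "L M = \<tau>'" by (rule linear_op_map_aff_mat_const[OF L E \<tau>' fixed M(2)])
  moreover have "L M = lin_comb d' c (\<lambda>i. L (x i)) k"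
    unfolding M_conv using linear_op_map_lin_comb[OF L] x P by blast
  ultimately have "\<tau>' - \<rho>' = lin_comb d' c (\<lambda>i. L (x i) - \<rho>') k"
    using lin_comb_minus_const[OF Lx \<rho>', of c] by (simp add: c)
  moreover have "\<forall>i<k. L (x i) - \<rho>' \<in> carrier_mat d' d' \<and> c i \<ge> 0"
    using x \<rho>' by (auto intro: minus_carrier_mat)
  ultimately have "trace_norm (\<tau>' - \<rho>') \<le> (\<Sum>i<k. c i * trace_norm (L (x i) - \<rho>'))"
    using trace_norm_lin_comb_le by simp
  also have "\<dots> \<le> (\<Sum>i<k. c i * (2 * \<epsilon>))"
  proof (intro sum_mono mult_left_mono)
    fix i assume "i \<in> {..<k}"
    then have "x i \<in> \<P>" "c i \<ge> 0" using x by auto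
    then show "trace_norm (L (x i) - \<rho>') \<le> 2 * \<epsilon>" "c i \<ge> 0"
      using close unfolding trace_dist_def by auto
  qed
  also have "\<dots> = 2 * \<epsilon>" using c by (simp flip: sum_distrib_right)
  finally show ?thesis unfolding trace_dist_def by simp
qed

theorem theorem1:
  fixes d d' :: nat and \<epsilon> :: real and \<rho>' \<tau>' :: "complex mat"
    and \<P> \<E> :: "complex mat set"
  assumes "0 \<le> \<epsilon>" and "\<epsilon> < 1"
    and "\<rho>' \<in> density_ops d'" and "\<tau>' \<in> density_ops d'"
    and "\<P> \<subseteq> density_ops d" and "\<E> \<subseteq> density_ops d"
    and "conv_mat d \<P> \<inter> aff_mat d \<E> \<noteq> {}"
  shows "(\<exists>L. linear_op_map d d' L \<and>
            (\<forall>\<rho>\<in>\<P>. \<forall>\<tau>\<in>\<E>. trace_dist (L \<rho>) \<rho>' \<le> \<epsilon> \<and> L \<tau> = \<tau>'))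
         \<longleftrightarrow> \<epsilon> \<ge> trace_dist \<rho>' \<tau>'"
proof -
  have \<rho>': "\<rho>' \<in> carrier_mat d' d'" and \<tau>': "\<tau>' \<in> carrier_mat d' d'"
    and P: "\<P> \<subseteq> carrier_mat d d" and E: "\<E> \<subseteq> carrier_mat d d"
    using assms(3-6) unfolding density_ops_def by auto
  obtain M where M: "M \<in> conv_mat d \<P>" "M \<in> aff_mat d \<E>" using assms(7) by blast
  have "\<P> \<noteq> {}" "\<E> \<noteq> {}"
    using M conv_mat_subset_aff_mat by fastforce+
  show ?thesis
  proof
    assume "\<exists>L. linear_op_map d d' L \<and> (\<forall>\<rho>\<in>\<P>. \<forall>\<tau>\<in>\<E>. trace_dist (L \<rho>) \<rho>' \<le> \<epsilon> \<and> L \<tau> = \<tau>')"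
    with \<open>\<P> \<noteq> {}\<close> \<open>\<E> \<noteq> {}\<close> obtain L where "linear_op_map d d' L"
      "\<forall>\<rho>\<in>\<P>. trace_dist (L \<rho>) \<rho>' \<le> \<epsilon>" "\<forall>\<tau>\<in>\<E>. L \<tau> = \<tau>'" by blast
    from trace_dist_le_of_conversion[OF this(1) P E \<rho>' \<tau>' M this(2,3)]
    show "\<epsilon> \<ge> trace_dist \<rho>' \<tau>'" using trace_dist_commute[OF \<rho>' \<tau>'] by simp
  next
    assume "\<epsilon> \<ge> trace_dist \<rho>' \<tau>'"
    have "mtrace \<rho> \<cdot>\<^sub>m \<tau>' = \<tau>'" if "\<rho> \<in> density_ops d" for \<rho>
      using that \<tau>' unfolding density_ops_def by (auto intro!: eq_matI)
    then show "\<exists>L. linear_op_map d d' L \<and> (\<forall>\<rho>\<in>\<P>. \<forall>\<tau>\<in>\<E>. trace_dist (L \<rho>) \<rho>' \<le> \<epsilon> \<and> L \<tau> = \<tau>')"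
      using linear_op_map_mtrace_smult[OF \<tau>'] assms(5,6) \<open>\<epsilon> \<ge> trace_dist \<rho>' \<tau>'\<close>
        trace_dist_commute[OF \<rho>' \<tau>'] by (intro exI[of _ "\<lambda>X. mtrace X \<cdot>\<^sub>m \<tau>'"]) auto
  qed
qed

end
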